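(* Let $\nu>-1$ be real. Then $J_\nu(\cdot;q^2)$ has countably infinitely many positive zeros, and each of them is simple.
   Context: Fix $0<q<1$. For $a\in\mathbb C$ put $(a;q)_0=1$, $(a;q)_k=\prod_{i=0}^{k-1}(1-aq^i)$, $(a;q)_\infty=\prod_{i\ge0}(1-aq^i)$. For $\nu\in\mathbb C$ and $x\in\mathbb C\setminus\{0\}$ the Hahn–Exton $q$-Bessel function is $$J_\nu(x;q^2)=\frac{x^\nu}{(q^2;q^2)_\infty}\sum_{k=0}^\infty\frac{(-1)^kq^{k(k+1)}(q^{2\nu+2k+2};q^2)_\infty}{(q^2;q^2)_k}\,x^{2k},$$ with $x^\nu=\exp(\nu\operatorname{Log}x)$ (principal branch). A zero $a$ is simple if $J_\nu'(a;q^2)\ne0$ (ordinary derivative in $x$). *)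

theory Defs
  imports "HOL-Analysis.Analysis"
begin

definition qpoch :: "complex \<Rightarrow> real \<Rightarrow> nat \<Rightarrow> complex" where
  "qpoch a q k = (\<Prod>i<k. 1 - a * of_real (q ^ i))"

definition qpoch_inf :: "complex \<Rightarrow> real \<Rightarrow> complex" where
  "qpoch_inf a q = (\<Prod>i. 1 - a * of_real (q ^ i))"

text \<open>Hahn--Exton q-Bessel function J_nu(x;q^2), with x^nu = exp(nu Log x) (principal branch).\<close>
definition hahn_exton_J :: "real \<Rightarrow> complex \<Rightarrow> complex \<Rightarrow> complex" where
  "hahn_exton_J q \<nu> x =
     x powr \<nu> / qpoch_inf (of_real (q^2)) (q^2) *
     (\<Sum>k. (-1) ^ k * of_real (q ^ (k * (k + 1))) *
            qpoch_inf (of_real q powr (2 * \<nu> + 2 * of_nat k + 2)) (q^2) /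
            qpoch (of_real (q^2)) (q^2) k * x ^ (2 * k))"

end

theory Submission
  imports Defs
begin

(*
  With w = x^2 one has J_nu(x;q^2) = x^nu / (q^2;q^2)_inf * G(w) for an entire power series G
  with real coefficients and G(0) <> 0. The recurrence of its coefficients makes G a solution of
  the second-order q-difference equation
      G(w) - (1 + t) G(r w) + t G(r^2 w) + r w G(r w) = 0,   r = q^2,  t = q^(2 nu),
  and the positive zeros a of J correspond to the positive zeros a^2 of G.
  Infinitely many zeros: for A > 1 + t, the equation at w = A / r^2 shows that G cannot keep
  one sign on [A, A / r^2].
  Simplicity: at a double zero l, the Casoratian of the equation along l, l r, l r^2, ...,
  weighted by (t r)^k, starts at 0, is nonincreasing with decrements t^k r^(k+1) G(l r^(k+1))^2,
  and tends to 0 because t r = q^(2 nu + 2) < 1; this is where nu > -1 enters. So it vanishes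
  identically, which forces G(0) = 0.
  Simple zeros of a differentiable function are isolated, hence there are countably many.
*)

definition qpoch_inf_real :: "real \<Rightarrow> real \<Rightarrow> real" where
  "qpoch_inf_real b r = (\<Prod>i. 1 - b * r ^ i)"

lemma convergent_prod_qpoch_inf_real:
  fixes r b :: real
  assumes "\<bar>r\<bar> < 1"
  shows "convergent_prod (\<lambda>i. 1 - b * r ^ i)"
proof -
  have "summable (\<lambda>i. norm ((1 - b * r ^ i) - 1))"
    using assms by (simp add: abs_mult power_abs summable_mult)
  then show ?thesis
    by (intro abs_convergent_prod_imp_convergent_prod summable_imp_abs_convergent_prod)
qed

lemma has_prod_qpoch_inf_real: "\<bar>r\<bar> < 1 \<Longrightarrow> (\<lambda>i. 1 - b * r ^ i) has_prod qpoch_inf_real b r"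
  unfolding qpoch_inf_real_def by (rule convergent_prod_has_prod[OF convergent_prod_qpoch_inf_real])

lemma qpoch_inf_real_nonzero:
  assumes "0 \<le> r" "r < 1" "b < 1"
  shows "qpoch_inf_real b r \<noteq> 0"
proof -
  have "b * r ^ i < 1" for i
  proof (cases "b \<le> 0")
    case True
    have "b * r ^ i \<le> 0" using True assms(1) by (simp add: mult_nonpos_nonneg)
    then show ?thesis by simp
  next
    case False
    then have "b * r ^ i \<le> b" using assms by (simp add: mult_left_le power_le_one)
    then show ?thesis using assms by simp
  qed
  then show ?thesis
    unfolding qpoch_inf_real_def using assms
    by (intro prodinf_nonzero convergent_prod_qpoch_inf_real) (auto simp: less_le)
qed

lemma qpoch_inf_real_unfold:
  assumes "\<bar>r\<bar> < 1" "b \<noteq> 1"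
  shows "qpoch_inf_real b r = (1 - b) * qpoch_inf_real (b * r) r"
proof -
  have "(\<lambda>i. 1 - b * r ^ Suc i) has_prod qpoch_inf_real (b * r) r"
    using has_prod_qpoch_inf_real[OF assms(1), of "b * r"] by (simp add: mult_ac)
  then have "(\<lambda>i. 1 - b * r ^ i) has_prod (qpoch_inf_real (b * r) r * (1 - b))"
    using has_prod_Suc_iff[of "\<lambda>i. 1 - b * r ^ i"] assms(2) by simp
  then show ?thesis
    using has_prod_unique2[OF has_prod_qpoch_inf_real[OF assms(1)]] by (simp add: mult.commute)
qed

lemma qpoch_inf_of_real:
  assumes "\<bar>r\<bar> < 1"
  shows "qpoch_inf (of_real b) r = of_real (qpoch_inf_real b r)"
proof -
  have "(\<lambda>i. complex_of_real (1 - b * r ^ i)) has_prod of_real (qpoch_inf_real b r)"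
    using has_prod_qpoch_inf_real[OF assms] by (simp only: has_prod_of_real_iff)
  then have "(\<lambda>i. 1 - of_real b * of_real (r ^ i)) has_prod complex_of_real (qpoch_inf_real b r)"
    by simp
  then show ?thesis
    unfolding qpoch_inf_def by (rule has_prod_unique[symmetric])
qed

lemma summable_powser_if_ratio_tendsto_zero:
  fixes c :: "nat \<Rightarrow> 'a::{real_normed_field,banach}"
  assumes ratio: "\<And>n. norm (c (Suc n)) \<le> \<rho> n * norm (c n)" and lim: "\<rho> \<longlonglongrightarrow> 0"
  shows "summable (\<lambda>n. c n * w ^ n)"
proof -
  have "eventually (\<lambda>n. \<rho> n * norm w < 1/2) sequentially"
    using tendsto_mult_left_zero[OF lim] by (rule order_tendstoD(2)) simp
  then obtain N where N: "\<And>n. n \<ge> N \<Longrightarrow> \<rho> n * norm w < 1/2"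
    by (auto simp: eventually_sequentially)
  show ?thesis
  proof (rule summable_ratio_test[of "1/2" N])
    fix n assume "N \<le> n"
    have "norm (c (Suc n) * w ^ Suc n) \<le> (\<rho> n * norm (c n)) * (norm w * norm w ^ n)"
      by (auto simp: norm_mult norm_power intro!: mult_right_mono ratio)
    also have "\<dots> = (\<rho> n * norm w) * (norm (c n) * norm w ^ n)"
      by (simp add: algebra_simps)
    also have "\<dots> \<le> 1/2 * (norm (c n) * norm w ^ n)"
      using N[OF \<open>N \<le> n\<close>] by (intro mult_right_mono) auto
    finally show "norm (c (Suc n) * w ^ Suc n) \<le> 1/2 * norm (c n * w ^ n)"
      by (simp add: norm_mult norm_power)
  qed simp
qed

lemma countable_zeros_if_simple:
  fixes f f' :: "real \<Rightarrow> real"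
  assumes deriv: "\<And>x. (f has_real_derivative f' x) (at x)"
    and simple: "\<And>x. f x = 0 \<Longrightarrow> f' x \<noteq> 0"
  shows "countable {x. f x = 0}"
proof -
  have "\<not> y islimpt {x. f x = 0}" for y
  proof (cases "f y = 0")
    case True
    have "((\<lambda>x. (f x - f y) / (x - y)) \<longlongrightarrow> f' y) (at y)"
      using deriv[of y] by (simp add: has_field_derivative_iff)
    then have "eventually (\<lambda>x. (f x - f y) / (x - y) \<noteq> 0) (at y)"
      using simple[OF True] by (rule tendsto_imp_eventually_ne)
    then have "eventually (\<lambda>x. x \<notin> {x. f x = 0}) (at y)"
      by (rule eventually_mono) (use True in auto)
    then show ?thesis
      by (simp add: islimpt_iff_eventually)
  next
    case False
    have "closed {x. f x = 0}"
      using deriv by (intro closed_Collect_eq continuous_at_imp_continuous_on)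
        (auto intro: DERIV_isCont)
    then show ?thesis
      using False closed_limpt by blast
  qed
  then have "{x. f x = 0} sparse_in UNIV"
    by (simp add: sparse_in_open)
  then show ?thesis
    using sparse_imp_countable[OF open_UNIV] by simp
qed

lemma IVT_sign_change:
  fixes f :: "real \<Rightarrow> real"
  assumes "a \<le> b" "f a * f b \<le> 0" "continuous_on {a..b} f"
  shows "\<exists>x. a \<le> x \<and> x \<le> b \<and> f x = 0"
  using assms IVT'[of f a 0 b] IVT2'[of f b 0 a] by (auto simp: mult_le_0_iff)

definition real_powser :: "(nat \<Rightarrow> real) \<Rightarrow> 'a::{real_normed_field,banach} \<Rightarrow> 'a" where
  "real_powser c w = (\<Sum>k. of_real (c k) * w ^ k)"

lemma real_powser_of_real:
  assumes "summable (\<lambda>k. c k * x ^ k)"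
  shows "real_powser c (of_real x) = of_real (real_powser c x)"
  unfolding real_powser_def using suminf_of_real[OF assms, where 'a='a] by simp

lemma has_field_derivative_real_powser:
  fixes w :: "'a::{real_normed_field,banach}"
  assumes "\<And>w::'a. summable (\<lambda>k. of_real (c k) * w ^ k)"
  shows "(real_powser c has_field_derivative real_powser (diffs c) w) (at w)"
  using termdiffs_strong_converges_everywhere[OF assms]
  unfolding real_powser_def[abs_def] by (simp add: diffs_of_real)

lemma isCont_real_powser:
  fixes w :: "'a::{real_normed_field,banach}"
  assumes "\<And>w::'a. summable (\<lambda>k. of_real (c k) * w ^ k)"
  shows "isCont (real_powser c) w"
  using isCont_powser_converges_everywhere[OF assms]
  unfolding real_powser_def[abs_def] .

lemma summable_real_powser_diffs:
  fixes w :: "'a::{real_normed_field,banach}"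
  assumes "\<And>w::'a. summable (\<lambda>k. of_real (c k) * w ^ k)"
  shows "summable (\<lambda>k. of_real (diffs c k) * w ^ k)"
  using termdiff_converges_all[OF assms] by (simp add: diffs_of_real)

lemma real_powser_0: "real_powser c 0 = of_real (c 0)"
  unfolding real_powser_def by simp

locale qdifference_eq =
  fixes G G' :: "real \<Rightarrow> real" and r t :: real
  assumes has_deriv: "\<And>w. (G has_real_derivative G' w) (at w)"
    and isCont_deriv_0: "isCont G' 0"
    and equation: "\<And>w. G w - (1 + t) * G (r * w) + t * G (r * (r * w)) + r * w * G (r * w) = 0"
    and r: "0 < r" "r < 1"
    and t: "0 < t" "t * r < 1"
begin

lemma isCont_G: "isCont G w"
  using has_deriv by (rule DERIV_isCont)

lemma equation_deriv:
  "G' w - (1 + t) * r * G' (r * w) + t * r\<^sup>2 * G' (r * (r * w))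
     + r * G (r * w) + r\<^sup>2 * w * G' (r * w) = 0"
proof -
  have "((\<lambda>w. G w - (1 + t) * G (r * w) + t * G (r * (r * w)) + r * w * G (r * w))
          has_real_derivative
        G' w - (1 + t) * (G' (r * w) * r) + t * (G' (r * (r * w)) * (r * r))
          + (r * G (r * w) + r * w * (G' (r * w) * r))) (at w)"
    by (auto intro!: derivative_eq_intros DERIV_chain2[OF has_deriv])
  then have "((\<lambda>w. 0) has_real_derivative
        G' w - (1 + t) * (G' (r * w) * r) + t * (G' (r * (r * w)) * (r * r))
          + (r * G (r * w) + r * w * (G' (r * w) * r))) (at w)"
    by (simp only: equation)
  from DERIV_unique[OF this DERIV_const] show ?thesis
    by (simp add: algebra_simps power2_eq_square)
qed

(* (t r)^k times the Casoratian of y_k = G (l r^k) and of its derivative in l, r^k G' (l r^k) *)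
definition casoratian :: "real \<Rightarrow> nat \<Rightarrow> real" where
  "casoratian l k = (t * r) ^ k *
     (G (l * r ^ k) * r * G' (l * r ^ Suc k) - G (l * r ^ Suc k) * G' (l * r ^ k))"

lemma casoratian_diff:
  "casoratian l k - casoratian l (Suc k) = t ^ k * r ^ Suc k * (G (l * r ^ Suc k))\<^sup>2"
proof -
  define y where "y n = G (l * r ^ n)" for n
  define d where "d n = r ^ n * G' (l * r ^ n)" for n
  define U where "U n = y n * d (Suc n) - y (Suc n) * d n" for n
  have r_pow: "r * (l * r ^ k) = l * r ^ Suc k" "r * (r * (l * r ^ k)) = l * r ^ Suc (Suc k)"
    by simp_all
  have e0: "y k - (1 + t) * y (Suc k) + t * y (Suc (Suc k)) + l * r ^ Suc k * y (Suc k) = 0"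
    (is "?E0 = 0")
    using equation[of "l * r ^ k"] unfolding y_def r_pow by (simp add: algebra_simps)
  have e1: "d k - (1 + t) * d (Suc k) + t * d (Suc (Suc k)) + r ^ Suc k * y (Suc k)
      + l * r ^ Suc k * d (Suc k) = 0" (is "?E1 = 0")
    using arg_cong[OF equation_deriv[of "l * r ^ k"], of "\<lambda>x. r ^ k * x"]
    unfolding d_def y_def r_pow by (simp add: algebra_simps power2_eq_square)
  have "casoratian l n = t ^ n * U n" for n
    unfolding casoratian_def U_def y_def d_def by (simp add: power_mult_distrib algebra_simps)
  then have "casoratian l k - casoratian l (Suc k) = t ^ k * (U k - t * U (Suc k))"
    by (simp add: algebra_simps)
  also have "U k - t * U (Suc k) = d (Suc k) * ?E0 - y (Suc k) * ?E1 + r ^ Suc k * (y (Suc k))\<^sup>2"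
    unfolding U_def by (simp add: algebra_simps power2_eq_square)
  also have "\<dots> = r ^ Suc k * (y (Suc k))\<^sup>2"
    unfolding e0 e1 by simp
  finally show ?thesis
    by (simp add: y_def)
qed

lemma tendsto_along_geometric:
  "(\<lambda>k. G (l * r ^ k)) \<longlonglongrightarrow> G 0" "(\<lambda>k. G' (l * r ^ k)) \<longlonglongrightarrow> G' 0"
proof -
  have "(\<lambda>k. l * r ^ k) \<longlonglongrightarrow> 0"
    using r by (intro tendsto_mult_right_zero LIMSEQ_power_zero) auto
  then show "(\<lambda>k. G (l * r ^ k)) \<longlonglongrightarrow> G 0" "(\<lambda>k. G' (l * r ^ k)) \<longlonglongrightarrow> G' 0"
    by (auto intro: isCont_tendsto_compose[OF isCont_G] isCont_tendsto_compose[OF isCont_deriv_0])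
qed

lemma casoratian_tendsto_0: "casoratian l \<longlonglongrightarrow> 0"
proof -
  have "(\<lambda>k. (t * r) ^ k) \<longlonglongrightarrow> 0"
    using r t by (intro LIMSEQ_power_zero) auto
  then have "casoratian l \<longlonglongrightarrow> 0 * (G 0 * r * G' 0 - G 0 * G' 0)"
    unfolding casoratian_def
    by (intro tendsto_mult tendsto_diff tendsto_const tendsto_along_geometric
        LIMSEQ_Suc[OF tendsto_along_geometric(1)] LIMSEQ_Suc[OF tendsto_along_geometric(2)])
  then show ?thesis
    by simp
qed

lemma simple_zero:
  assumes "G 0 \<noteq> 0" "G l = 0"
  shows "G' l \<noteq> 0"
proof
  assume "G' l = 0"
  then have start: "casoratian l 0 = 0"
    unfolding casoratian_def using assms(2) by simp
  have step: "0 \<le> t ^ k * r ^ Suc k * (G (l * r ^ Suc k))\<^sup>2" for k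
    using r t by simp
  have dec: "decseq (casoratian l)"
  proof (rule decseq_SucI)
    show "casoratian l (Suc k) \<le> casoratian l k" for k
      using casoratian_diff[of l k] step[of k] by linarith
  qed
  have "casoratian l k = 0" for k
    using decseq_ge[OF dec casoratian_tendsto_0, of k] decseqD[OF dec, of 0 k] start by simp
  then have zeros: "G (l * r ^ Suc k) = 0" for k
    using casoratian_diff[of l k] r t by simp
  have "(\<lambda>k. G (l * r ^ Suc k)) \<longlonglongrightarrow> G 0"
    by (rule LIMSEQ_Suc[OF tendsto_along_geometric(1)])
  then have "(\<lambda>k. 0) \<longlonglongrightarrow> G 0"
    unfolding zeros .
  then show False
    using assms(1) by (simp add: LIMSEQ_const_iff)
qed

lemma zeros_unbounded: "\<exists>w > Z. G w = 0"
proof -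
  define A where "A = max Z (1 + t) + 1"
  define B where "B = A / r"
  define w where "w = B / r"
  have A: "A > Z" "A > 1 + t" "A > 0"
    using t unfolding A_def by auto
  have AB: "A < B" and Bw: "B < w"
    using A(3) r unfolding B_def w_def by (auto simp: less_divide_eq)
  have "r * w = B" "r * B = A"
    using r unfolding B_def w_def by auto
  then have Gw: "G w = (1 + t - B) * G B - t * G A"
    using equation[of w] by (simp add: algebra_simps)
  have GBw: "G B * G w = (1 + t - B) * (G B)\<^sup>2 - t * (G A * G B)"
    unfolding Gw by (simp add: algebra_simps power2_eq_square)
  have cont: "continuous_on {a..b} G" for a b
    using isCont_G by (intro continuous_at_imp_continuous_on) auto
  have "G A * G B \<le> 0 \<or> G B * G w \<le> 0"
  proof (rule disjCI)
    assume "\<not> G B * G w \<le> 0"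
    moreover have "(1 + t - B) * (G B)\<^sup>2 \<le> 0"
      using A AB by (intro mult_nonpos_nonneg) auto
    ultimately have "t * (G A * G B) < 0"
      using GBw by linarith
    then show "G A * G B \<le> 0"
      using t by (auto simp: mult_less_0_iff mult_le_0_iff)
  qed
  then obtain x where "A \<le> x" "G x = 0"
  proof
    assume "G A * G B \<le> 0"
    then show ?thesis
      using IVT_sign_change[OF less_imp_le[OF AB] _ cont] that by blast
  next
    assume "G B * G w \<le> 0"
    then obtain x where "B \<le> x" "G x = 0"
      using IVT_sign_change[OF less_imp_le[OF Bw] _ cont] by blast
    then show ?thesis
      using that[of x] AB by simp
  qed
  then show ?thesis
    using A by (intro exI[of _ x]) auto
qed

lemma countable_zeros: "G 0 \<noteq> 0 \<Longrightarrow> countable {w. G w = 0}"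
  by (rule countable_zeros_if_simple[OF has_deriv simple_zero])

lemma infinite_positive_zeros: "infinite {w. w > 0 \<and> G w = 0}"
proof
  assume "finite {w. w > 0 \<and> G w = 0}"
  then obtain M where "\<And>w. w > 0 \<Longrightarrow> G w = 0 \<Longrightarrow> w \<le> M"
    by (metis (mono_tags, lifting) bdd_above_finite bdd_above_def mem_Collect_eq)
  with zeros_unbounded[of "max 0 M"] show False
    by force
qed

end

definition hahn_exton_coeff :: "real \<Rightarrow> real \<Rightarrow> nat \<Rightarrow> real" where
  "hahn_exton_coeff q \<nu> k = (-1) ^ k * q ^ (k * (k + 1))
     * qpoch_inf_real (q powr (2 * \<nu>) * (q\<^sup>2) ^ Suc k) (q\<^sup>2) / (\<Prod>i<k. 1 - (q\<^sup>2) ^ Suc i)"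

lemma hahn_exton_J_eq_real_powser:
  assumes "0 < q" "q < 1"
  shows "hahn_exton_J q (of_real \<nu>) x =
    x powr of_real \<nu> / of_real (qpoch_inf_real (q\<^sup>2) (q\<^sup>2))
      * real_powser (hahn_exton_coeff q \<nu>) (x\<^sup>2)"
proof -
  have r: "\<bar>q\<^sup>2\<bar> < 1"
    using assms by (simp add: power_less_one_iff)
  have exponent: "complex_of_real q powr (2 * of_real \<nu> + 2 * of_nat k + 2)
      = of_real (q powr (2 * \<nu>) * (q\<^sup>2) ^ Suc k)" for k
  proof -
    have "q powr (2 * \<nu> + 2 * real k + 2) = q powr (2 * \<nu>) * q powr real (2 * Suc k)"
      by (simp add: powr_add[symmetric] algebra_simps)
    also have "\<dots> = q powr (2 * \<nu>) * (q\<^sup>2) ^ Suc k"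
      unfolding powr_realpow[OF assms(1)] power_mult ..
    finally show ?thesis
      using powr_of_real[of q "2 * \<nu> + 2 * real k + 2"] assms(1) by simp
  qed
  have "(-1) ^ k * of_real (q ^ (k * (k + 1))) *
      qpoch_inf (of_real q powr (2 * of_real \<nu> + 2 * of_nat k + 2)) (q\<^sup>2) /
      qpoch (of_real (q\<^sup>2)) (q\<^sup>2) k * x ^ (2 * k)
      = of_real (hahn_exton_coeff q \<nu> k) * (x\<^sup>2) ^ k" for k
    unfolding hahn_exton_coeff_def exponent qpoch_inf_of_real[OF r] qpoch_def
    by (simp add: power_mult[symmetric] mult.commute[of 2])
  then show ?thesis
    unfolding hahn_exton_J_def real_powser_def qpoch_inf_of_real[OF r] by simp
qed

context
  fixes q \<nu> :: real
  assumes q: "0 < q" "q < 1" and \<nu>: "\<nu> > -1"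
begin

lemma hahn_exton_parameters:
  "0 < q\<^sup>2" "q\<^sup>2 < 1" "0 < q powr (2 * \<nu>)" "q powr (2 * \<nu>) * q\<^sup>2 < 1"
proof -
  show "0 < q\<^sup>2" "q\<^sup>2 < 1" "0 < q powr (2 * \<nu>)"
    using q by (auto simp: power_less_one_iff)
  have "q powr (2 * \<nu>) * q\<^sup>2 = q powr (2 * \<nu> + 2)"
    using q by (simp add: powr_add powr_realpow)
  also have "\<dots> < 1"
    using powr_less_mono'[OF q, of 0 "2 * \<nu> + 2"] \<nu> q by simp
  finally show "q powr (2 * \<nu>) * q\<^sup>2 < 1" .
qed

lemma hahn_exton_powers_lt_1: "(q\<^sup>2) ^ Suc k < 1" "q powr (2 * \<nu>) * (q\<^sup>2) ^ Suc k < 1"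
proof -
  show "(q\<^sup>2) ^ Suc k < 1"
    using hahn_exton_parameters by (intro power_Suc_less_one) auto
  have "(q\<^sup>2) ^ Suc k \<le> q\<^sup>2"
    using power_decreasing[of 1 "Suc k" "q\<^sup>2"] hahn_exton_parameters by simp
  then have "q powr (2 * \<nu>) * (q\<^sup>2) ^ Suc k \<le> q powr (2 * \<nu>) * q\<^sup>2"
    using hahn_exton_parameters(3) by (intro mult_left_mono) auto
  then show "q powr (2 * \<nu>) * (q\<^sup>2) ^ Suc k < 1"
    using hahn_exton_parameters(4) by linarith
qed

lemma hahn_exton_coeff_Suc:
  "hahn_exton_coeff q \<nu> (Suc k)
       * ((1 - (q\<^sup>2) ^ Suc k) * (1 - q powr (2 * \<nu>) * (q\<^sup>2) ^ Suc k))
     = - ((q\<^sup>2) ^ Suc k * hahn_exton_coeff q \<nu> k)"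
proof -
  define r t where "r = q\<^sup>2" and "t = q powr (2 * \<nu>)"
  have r_pow: "r ^ Suc i < 1" and tr_pow: "t * r ^ Suc i < 1" for i
    using hahn_exton_powers_lt_1 unfolding r_def t_def by auto
  have denom: "(\<Prod>i<k. 1 - r ^ Suc i) \<noteq> 0"
    using r_pow by (simp add: prod_zero_iff less_imp_neq del: power_Suc)
  have unfold: "qpoch_inf_real (t * r ^ Suc k) r
      = (1 - t * r ^ Suc k) * qpoch_inf_real (t * r ^ Suc (Suc k)) r"
    using qpoch_inf_real_unfold[of r "t * r ^ Suc k"] hahn_exton_parameters tr_pow[of k]
    by (simp add: r_def mult_ac)
  have "Suc k * (Suc k + 1) = k * (k + 1) + 2 * Suc k"
    by simp
  then have "q ^ (Suc k * (Suc k + 1)) = q ^ (k * (k + 1)) * r ^ Suc k"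
    unfolding r_def by (simp only: power_add power_mult)
  then show ?thesis
    using denom r_pow[of k] tr_pow[of k]
    unfolding hahn_exton_coeff_def r_def[symmetric] t_def[symmetric] unfold prod.lessThan_Suc
    by (simp add: field_simps)
qed

lemma hahn_exton_coeff_0_nonzero: "hahn_exton_coeff q \<nu> 0 \<noteq> 0"
  using hahn_exton_parameters qpoch_inf_real_nonzero[of "q\<^sup>2" "q powr (2 * \<nu>) * q\<^sup>2"]
  by (simp add: hahn_exton_coeff_def)

lemma summable_hahn_exton_series:
  fixes w :: "'a::{real_normed_field,banach}"
  shows "summable (\<lambda>k. of_real (hahn_exton_coeff q \<nu> k) * w ^ k)"
proof (rule summable_powser_if_ratio_tendsto_zero)
  define \<rho> where
    "\<rho> k = (q\<^sup>2) ^ Suc k / ((1 - (q\<^sup>2) ^ Suc k) * (1 - q powr (2 * \<nu>) * (q\<^sup>2) ^ Suc k))" for k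
  show "norm (of_real (hahn_exton_coeff q \<nu> (Suc k)) :: 'a)
      \<le> \<rho> k * norm (of_real (hahn_exton_coeff q \<nu> k) :: 'a)" for k
  proof -
    let ?R = "(q\<^sup>2) ^ Suc k"
    let ?D = "(1 - (q\<^sup>2) ^ Suc k) * (1 - q powr (2 * \<nu>) * (q\<^sup>2) ^ Suc k)"
    have "0 < ?D"
      using hahn_exton_powers_lt_1[of k] by simp
    then have "hahn_exton_coeff q \<nu> (Suc k) = - (?R * hahn_exton_coeff q \<nu> k) / ?D"
      using hahn_exton_coeff_Suc[of k] by (subst nonzero_eq_divide_eq) auto
    then have "\<bar>hahn_exton_coeff q \<nu> (Suc k)\<bar> = \<bar>?R * hahn_exton_coeff q \<nu> k\<bar> / ?D"
      using \<open>0 < ?D\<close> by (simp only: abs_minus_cancel abs_divide abs_of_pos)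
    also have "\<dots> = ?R / ?D * \<bar>hahn_exton_coeff q \<nu> k\<bar>"
      by (simp add: abs_mult)
    finally show ?thesis
      unfolding \<rho>_def by simp
  qed
  have "(\<lambda>k. (q\<^sup>2) ^ Suc k) \<longlonglongrightarrow> 0"
    using hahn_exton_parameters by (intro LIMSEQ_Suc LIMSEQ_power_zero) auto
  then have "\<rho> \<longlonglongrightarrow> 0 / ((1 - 0) * (1 - q powr (2 * \<nu>) * 0))"
    unfolding \<rho>_def by (intro tendsto_intros) auto
  then show "\<rho> \<longlonglongrightarrow> 0"
    by simp
qed

lemma hahn_exton_series_qdifference:
  fixes w :: real
  defines "G \<equiv> real_powser (hahn_exton_coeff q \<nu>) :: real \<Rightarrow> real"
  defines "r \<equiv> q\<^sup>2" and "t \<equiv> q powr (2 * \<nu>)"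
  shows "G w - (1 + t) * G (r * w) + t * G (r * (r * w)) + r * w * G (r * w) = 0"
proof -
  let ?c = "hahn_exton_coeff q \<nu>"
  have sums: "(\<lambda>k. ?c k * x ^ k) sums G x" for x
    unfolding G_def real_powser_def using summable_hahn_exton_series[of x] by (simp add: summable_sums)
  define a where "a k = ?c k * w ^ k - (1 + t) * (?c k * (r * w) ^ k) + t * (?c k * (r * (r * w)) ^ k)"
    for k
  have a_sums: "a sums (G w - (1 + t) * G (r * w) + t * G (r * (r * w)))"
    unfolding a_def by (intro sums_add sums_diff sums_mult sums)
  have a_Suc: "a (Suc k) = - (r * w) * (?c k * (r * w) ^ k)" for k
  proof -
    have "a (Suc k) = ?c (Suc k) * ((1 - r ^ Suc k) * (1 - t * r ^ Suc k)) * w ^ Suc k"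
      unfolding a_def power_mult_distrib by (simp add: algebra_simps)
    also have "\<dots> = - (r * w) * (?c k * (r * w) ^ k)"
      unfolding r_def t_def hahn_exton_coeff_Suc by (simp add: power_mult_distrib algebra_simps)
    finally show ?thesis .
  qed
  have "(\<lambda>k. a (Suc k)) sums (- (r * w) * G (r * w))"
    unfolding a_Suc by (rule sums_mult[OF sums])
  moreover have "a 0 = 0"
    unfolding a_def by (simp add: algebra_simps)
  ultimately have "a sums (- (r * w) * G (r * w))"
    by (simp add: sums_Suc_iff)
  with a_sums show ?thesis
    using sums_unique2 by fastforce
qed

lemma qdifference_eq_hahn_exton_series:
  "qdifference_eq (real_powser (hahn_exton_coeff q \<nu>)) (real_powser (diffs (hahn_exton_coeff q \<nu>)))
     (q\<^sup>2) (q powr (2 * \<nu>))"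
proof
  show "(real_powser (hahn_exton_coeff q \<nu>) has_real_derivative
      real_powser (diffs (hahn_exton_coeff q \<nu>)) w) (at w)" for w
    by (rule has_field_derivative_real_powser[OF summable_hahn_exton_series])
  show "isCont (real_powser (diffs (hahn_exton_coeff q \<nu>)) :: real \<Rightarrow> real) 0"
    by (intro isCont_real_powser summable_real_powser_diffs summable_hahn_exton_series)
qed (use hahn_exton_series_qdifference hahn_exton_parameters in auto)

lemma hahn_exton_J_zero_iff:
  assumes "a > 0"
  shows "hahn_exton_J q (of_real \<nu>) (of_real a) = 0
    \<longleftrightarrow> real_powser (hahn_exton_coeff q \<nu>) (a\<^sup>2) = 0"
proof -
  have "qpoch_inf_real (q\<^sup>2) (q\<^sup>2) \<noteq> 0"
    using hahn_exton_parameters by (intro qpoch_inf_real_nonzero) auto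
  moreover have "complex_of_real a powr of_real \<nu> \<noteq> 0"
    using assms by (simp add: powr_def)
  moreover have "real_powser (hahn_exton_coeff q \<nu>) (complex_of_real a ^ 2)
      = of_real (real_powser (hahn_exton_coeff q \<nu>) (a\<^sup>2))"
    using real_powser_of_real[of "hahn_exton_coeff q \<nu>" "a\<^sup>2"] summable_hahn_exton_series[of "a\<^sup>2"]
    by simp
  ultimately show ?thesis
    unfolding hahn_exton_J_eq_real_powser[OF q] by simp
qed

lemma positive_zeros_hahn_exton_J:
  "{a. a > 0 \<and> hahn_exton_J q (of_real \<nu>) (of_real a) = 0}
     = sqrt ` {w. w > 0 \<and> real_powser (hahn_exton_coeff q \<nu>) w = 0}"
proof -
  have "a \<in> sqrt ` {w. w > 0 \<and> real_powser (hahn_exton_coeff q \<nu>) w = 0}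
      \<longleftrightarrow> a > 0 \<and> real_powser (hahn_exton_coeff q \<nu>) (a\<^sup>2) = 0" for a
    by (auto intro!: image_eqI[of _ _ "a\<^sup>2"])
  then show ?thesis
    using hahn_exton_J_zero_iff by blast
qed

lemma deriv_hahn_exton_J_nonzero:
  assumes "a > 0" "real_powser (hahn_exton_coeff q \<nu>) (a\<^sup>2) = 0"
    and "real_powser (diffs (hahn_exton_coeff q \<nu>)) (a\<^sup>2) \<noteq> 0"
  shows "deriv (hahn_exton_J q (of_real \<nu>)) (of_real a) \<noteq> 0"
proof -
  let ?c = "hahn_exton_coeff q \<nu>" and ?C = "complex_of_real (qpoch_inf_real (q\<^sup>2) (q\<^sup>2))"
  let ?x = "complex_of_real a" and ?s = "complex_of_real \<nu>"
  have C: "?C \<noteq> 0"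
    using hahn_exton_parameters by (simp add: qpoch_inf_real_nonzero)
  have x_powr: "?x powr ?s \<noteq> 0"
    using assms(1) by (simp add: powr_def)
  have G: "real_powser ?c (?x\<^sup>2) = 0"
    using real_powser_of_real[of ?c "a\<^sup>2"] summable_hahn_exton_series[of "a\<^sup>2"] assms(2) by simp
  have G': "real_powser (diffs ?c) (?x\<^sup>2) \<noteq> 0"
    using real_powser_of_real[where 'a=complex, of "diffs ?c" "a\<^sup>2"] assms(3)
      summable_real_powser_diffs[OF summable_hahn_exton_series, of "a\<^sup>2"] by simp
  have "((\<lambda>x. x powr ?s / ?C * real_powser ?c (x\<^sup>2)) has_field_derivative
      ?x powr ?s / ?C * (real_powser (diffs ?c) (?x\<^sup>2) * (2 * ?x))) (at ?x)"
    using assms(1) G C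
    by (auto intro!: derivative_eq_intros has_field_derivative_powr
        DERIV_chain2[OF has_field_derivative_real_powser[OF summable_hahn_exton_series]]
        simp: complex_nonpos_Reals_iff mult_ac)
  moreover have "hahn_exton_J q (of_real \<nu>) = (\<lambda>x. x powr ?s / ?C * real_powser ?c (x\<^sup>2))"
    using hahn_exton_J_eq_real_powser[OF q] by blast
  ultimately have "deriv (hahn_exton_J q (of_real \<nu>)) ?x
      = ?x powr ?s / ?C * (real_powser (diffs ?c) (?x\<^sup>2) * (2 * ?x))"
    by (simp add: DERIV_imp_deriv)
  then show ?thesis
    using C x_powr G' assms(1) by simp
qed

end

theorem theorem3p4:
  fixes q \<nu> :: real
  assumes "0 < q" "q < 1" "\<nu> > -1"
  shows "countable {a::real. a > 0 \<and> hahn_exton_J q (of_real \<nu>) (of_real a) = 0}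
       \<and> infinite {a::real. a > 0 \<and> hahn_exton_J q (of_real \<nu>) (of_real a) = 0}
       \<and> (\<forall>a::real. a > 0 \<and> hahn_exton_J q (of_real \<nu>) (of_real a) = 0 \<longrightarrow>
            deriv (hahn_exton_J q (of_real \<nu>)) (of_real a) \<noteq> 0)"
proof -
  let ?G = "real_powser (hahn_exton_coeff q \<nu>) :: real \<Rightarrow> real"
  interpret G: qdifference_eq ?G "real_powser (diffs (hahn_exton_coeff q \<nu>))"
      "q\<^sup>2" "q powr (2 * \<nu>)"
    by (rule qdifference_eq_hahn_exton_series[OF assms])
  have G0: "?G 0 \<noteq> 0"
    using hahn_exton_coeff_0_nonzero[OF assms] by (simp add: real_powser_0)
  have "countable (sqrt ` {w. w > 0 \<and> ?G w = 0})"
    using G.countable_zeros[OF G0] by (intro countable_image) (auto intro: countable_subset)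
  moreover have "infinite (sqrt ` {w. w > 0 \<and> ?G w = 0})"
    using G.infinite_positive_zeros by (auto dest: finite_imageD simp: inj_on_def)
  moreover have "deriv (hahn_exton_J q (of_real \<nu>)) (of_real a) \<noteq> 0"
    if "a > 0" "hahn_exton_J q (of_real \<nu>) (of_real a) = 0" for a
    using that deriv_hahn_exton_J_nonzero[OF assms] G.simple_zero[OF G0] hahn_exton_J_zero_iff[OF assms]
    by blast
  ultimately show ?thesis
    unfolding positive_zeros_hahn_exton_J[OF assms] by blast
qed

end
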